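(* Let $\sigma>0$, $t>0$, and $a\sim N(0,\sigma^2)$. Then \[ \mathbb{E}\,S_t^2(a)\ \le\ \sigma^4\sqrt{\frac{2}{\pi e}}\;t^{-2}\,e^{-t^2/(2\sigma^2)}, \] where $S_t$ is the soft thresholding operator.
   Context: The soft thresholding operator is $S_t(u)=u-t$ if $u>t$, $S_t(u)=0$ if $|u|\le t$, and $S_t(u)=u+t$ if $u<-t$. *)

theory Defs
  imports "HOL-Probability.Probability"
begin

definition soft_thresh :: "real \<Rightarrow> real \<Rightarrow> real" where
  "soft_thresh t u = (if u > t then u - t else if u < - t then u + t else 0)"

end

theory Submission
  imports Defs
begin

text \<open>
  By symmetry of the Gaussian density \<phi>, E S_t(a)^2 = 2 \<integral>_0^\<infinity> \<phi>(t + u) u^2 du.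
  Expanding (t + u)^2 factors \<phi>(t + u) as \<phi>(t) exp(-t u/\<sigma>^2) exp(-u^2/(2\<sigma>^2)), and the bound
  v exp(-v^2/2) \<le> exp(-1/2) at v = u/\<sigma> trades one factor u of u^2 exp(-u^2/(2\<sigma>^2)) for
  \<sigma> exp(-1/2). What remains is the exponential moment \<integral>_0^\<infinity> u exp(-t u/\<sigma>^2) du = \<sigma>^4/t^2.
\<close>

lemma mult_exp_neg_half_square_le:
  fixes v :: real
  shows "v * exp (- v\<^sup>2 / 2) \<le> exp (- 1 / 2)"
proof -
  have "v \<le> 1 + (v\<^sup>2 - 1) / 2"
    using zero_le_power2[of "v - 1"] by (simp add: power2_eq_square field_simps)
  also have "\<dots> \<le> exp ((v\<^sup>2 - 1) / 2)"
    by (rule exp_ge_add_one_self)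
  finally have "v * exp (- v\<^sup>2 / 2) \<le> exp ((v\<^sup>2 - 1) / 2) * exp (- v\<^sup>2 / 2)"
    by simp
  also have "\<dots> = exp (- 1 / 2)"
    by (simp add: field_simps flip: exp_add)
  finally show ?thesis .
qed

lemma normal_density_shift_mult_pos_part_square_le:
  fixes \<sigma> t u :: real
  assumes "\<sigma> > 0"
  shows "normal_density 0 \<sigma> (t + u) * (max 0 u)\<^sup>2
    \<le> exp (- 1 / 2) / sqrt (2 * pi) * exp (- t\<^sup>2 / (2 * \<sigma>\<^sup>2)) * (max 0 u * exp (- t * u / \<sigma>\<^sup>2))"
proof (cases "u \<le> 0")
  case False
  let ?C = "exp (- t\<^sup>2 / (2 * \<sigma>\<^sup>2)) * exp (- t * u / \<sigma>\<^sup>2) / (sqrt (2 * pi) * \<sigma>)"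
  have "u\<^sup>2 * exp (- (u / \<sigma>)\<^sup>2 / 2) = (u * \<sigma>) * ((u / \<sigma>) * exp (- (u / \<sigma>)\<^sup>2 / 2))"
    using assms by (simp add: power2_eq_square)
  also have "\<dots> \<le> (u * \<sigma>) * exp (- 1 / 2)"
    using False assms by (intro mult_left_mono mult_exp_neg_half_square_le) auto
  finally have bound: "u\<^sup>2 * exp (- (u / \<sigma>)\<^sup>2 / 2) \<le> (u * \<sigma>) * exp (- 1 / 2)" .
  have "normal_density 0 \<sigma> (t + u) * (max 0 u)\<^sup>2 = ?C * (u\<^sup>2 * exp (- (u / \<sigma>)\<^sup>2 / 2))"
    using False assms by (simp add: normal_density_def real_sqrt_mult power2_eq_square field_simps
        flip: exp_add)
  also have "\<dots> \<le> ?C * ((u * \<sigma>) * exp (- 1 / 2))"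
    using assms bound by (intro mult_left_mono) auto
  also have "\<dots> = exp (- 1 / 2) / sqrt (2 * pi) * exp (- t\<^sup>2 / (2 * \<sigma>\<^sup>2)) * (max 0 u * exp (- t * u / \<sigma>\<^sup>2))"
    using False assms by (simp add: field_simps)
  finally show ?thesis .
qed simp

lemma nn_integral_pos_part_mult_exp:
  fixes c :: real
  assumes "c > 0"
  shows "(\<integral>\<^sup>+u. ennreal (max 0 u * exp (- c * u)) \<partial>lborel) = ennreal (1 / c\<^sup>2)"
proof -
  have "(\<integral>\<^sup>+u. ennreal (max 0 u * exp (- c * u)) \<partial>lborel)
      = (\<integral>\<^sup>+u. ennreal (1 / c) * ennreal (exponential_density c u * u ^ 1) \<partial>lborel)"
    using assms by (intro nn_integral_cong)
      (auto simp: exponential_density_def max_def ennreal_mult'[symmetric] mult_ac)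
  also have "\<dots> = ennreal (1 / c) * (fact 1 / (fact 0 * c ^ 1))"
    using nn_integral_erlang_ith_moment[OF assms, of 0 1] by (simp add: nn_integral_cmult)
  also have "\<dots> = ennreal (1 / c\<^sup>2)"
    using assms by (simp add: ennreal_mult'[symmetric] power2_eq_square divide_ennreal)
  finally show ?thesis .
qed

lemma soft_thresh_square_eq:
  fixes t x :: real
  assumes "t \<ge> 0"
  shows "(soft_thresh t x)\<^sup>2 = (max 0 (x - t))\<^sup>2 + (max 0 (- x - t))\<^sup>2"
  using assms by (auto simp: soft_thresh_def max_def power2_eq_square algebra_simps)

lemma borel_measurable_soft_thresh[measurable]: "soft_thresh t \<in> borel_measurable borel"
  unfolding soft_thresh_def by measurable

lemma nn_integral_normal_soft_thresh_square:
  fixes \<sigma> t :: real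
  assumes "t \<ge> 0"
  shows "(\<integral>\<^sup>+x. ennreal (normal_density 0 \<sigma> x * (soft_thresh t x)\<^sup>2) \<partial>lborel)
    = 2 * (\<integral>\<^sup>+u. ennreal (normal_density 0 \<sigma> (t + u) * (max 0 u)\<^sup>2) \<partial>lborel)"
proof -
  let ?f = "\<lambda>x. ennreal (normal_density 0 \<sigma> x * (max 0 (x - t))\<^sup>2)"
  let ?g = "\<lambda>x. ennreal (normal_density 0 \<sigma> x * (max 0 (- x - t))\<^sup>2)"
  have "(\<integral>\<^sup>+x. ennreal (normal_density 0 \<sigma> x * (soft_thresh t x)\<^sup>2) \<partial>lborel)
      = (\<integral>\<^sup>+x. ?f x + ?g x \<partial>lborel)"
    using assms by (intro nn_integral_cong)
      (simp add: soft_thresh_square_eq distrib_left normal_density_nonneg flip: ennreal_plus)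
  also have "\<dots> = integral\<^sup>N lborel ?f + integral\<^sup>N lborel ?g"
    by (rule nn_integral_add) auto
  also have "integral\<^sup>N lborel ?f = (\<integral>\<^sup>+u. ?f (t + u) \<partial>lborel)"
    using nn_integral_real_affine[of ?f 1 t] by simp
  also have "integral\<^sup>N lborel ?g = (\<integral>\<^sup>+u. ?g (- t - u) \<partial>lborel)"
    using nn_integral_real_affine[of ?g "- 1" "- t"] by simp
  finally show ?thesis
    by (simp add: mult_2 normal_density_def power2_eq_square algebra_simps)
qed

lemma nn_integral_normal_shift_pos_part_square_le:
  fixes \<sigma> t :: real
  assumes "\<sigma> > 0" and "t > 0"
  shows "(\<integral>\<^sup>+u. ennreal (normal_density 0 \<sigma> (t + u) * (max 0 u)\<^sup>2) \<partial>lborel)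
    \<le> ennreal (exp (- 1 / 2) / sqrt (2 * pi) * exp (- t\<^sup>2 / (2 * \<sigma>\<^sup>2)) * (\<sigma>\<^sup>2 / t)\<^sup>2)"
proof -
  define A where "A = exp (- 1 / 2) / sqrt (2 * pi) * exp (- t\<^sup>2 / (2 * \<sigma>\<^sup>2))"
  have "(\<integral>\<^sup>+u. ennreal (normal_density 0 \<sigma> (t + u) * (max 0 u)\<^sup>2) \<partial>lborel)
      \<le> (\<integral>\<^sup>+u. ennreal A * ennreal (max 0 u * exp (- (t / \<sigma>\<^sup>2) * u)) \<partial>lborel)"
    using normal_density_shift_mult_pos_part_square_le[OF assms(1), of t]
    by (intro nn_integral_mono) (simp add: A_def ennreal_mult'[symmetric])
  also have "\<dots> = ennreal A * ennreal (1 / (t / \<sigma>\<^sup>2)\<^sup>2)"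
    using assms nn_integral_pos_part_mult_exp[of "t / \<sigma>\<^sup>2"] by (simp add: nn_integral_cmult)
  also have "\<dots> = ennreal (A * (\<sigma>\<^sup>2 / t)\<^sup>2)"
    by (simp add: A_def ennreal_mult'[symmetric] power_divide)
  finally show ?thesis
    unfolding A_def .
qed

lemma sqrt_two_div_pi_exp_one: "sqrt (2 / (pi * exp 1)) = 2 * exp (- 1 / 2) / sqrt (2 * pi)"
proof (rule real_sqrt_unique)
  show "(2 * exp (- 1 / 2) / sqrt (2 * pi))\<^sup>2 = 2 / (pi * exp 1)"
    by (simp add: power_divide power_mult_distrib exp_minus field_simps
        flip: exp_add exp_of_nat_mult)
qed simp

theorem lemma4p6:
  fixes M :: "'a measure" and a :: "'a \<Rightarrow> real" and \<sigma> t :: real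
  assumes "prob_space M"
    and "\<sigma> > 0" and "t > 0"
    and "distributed M lborel a (normal_density 0 \<sigma>)"
  shows "prob_space.expectation M (\<lambda>\<omega>. (soft_thresh t (a \<omega>))\<^sup>2)
           \<le> \<sigma> ^ 4 * sqrt (2 / (pi * exp 1)) * t powr (-2) * exp (- t\<^sup>2 / (2 * \<sigma>\<^sup>2))"
proof -
  interpret prob_space M by fact
  define C where "C = exp (- 1 / 2) / sqrt (2 * pi) * exp (- t\<^sup>2 / (2 * \<sigma>\<^sup>2)) * (\<sigma>\<^sup>2 / t)\<^sup>2"
  let ?B = "\<sigma> ^ 4 * sqrt (2 / (pi * exp 1)) * t powr (-2) * exp (- t\<^sup>2 / (2 * \<sigma>\<^sup>2))"
  have two_C_eq: "2 * C = ?B"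
    unfolding C_def sqrt_two_div_pi_exp_one using assms(2,3)
    by (simp add: powr_minus powr_numeral power2_eq_square eval_nat_numeral field_simps)
  have "(\<integral>\<^sup>+\<omega>. ennreal ((soft_thresh t (a \<omega>))\<^sup>2) \<partial>M)
      = (\<integral>\<^sup>+x. ennreal (normal_density 0 \<sigma> x * (soft_thresh t x)\<^sup>2) \<partial>lborel)"
    using distributed_nn_integral[OF assms(4), of "\<lambda>x. ennreal ((soft_thresh t x)\<^sup>2)"]
    by (simp add: normal_density_nonneg ennreal_mult')
  also have "\<dots> = 2 * (\<integral>\<^sup>+u. ennreal (normal_density 0 \<sigma> (t + u) * (max 0 u)\<^sup>2) \<partial>lborel)"
    using assms(3) by (simp add: nn_integral_normal_soft_thresh_square)
  also have "\<dots> \<le> 2 * ennreal C"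
    unfolding C_def using assms(2,3)
    by (intro mult_left_mono nn_integral_normal_shift_pos_part_square_le) auto
  also have "2 * ennreal C = ennreal ?B"
    using two_C_eq by (metis ennreal_mult' ennreal_numeral zero_le_numeral)
  finally show ?thesis
    by (intro integral_real_bounded) auto
qed

end
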